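(* Let $(G,\sigma)$ be a finite connected signed graph satisfying $CD^{\sigma}(K,N)$ for some $K\in\mathbb{R}$, $N\in(0,\infty]$, and let $f:V\to\mathbb{R}$ be an eigenfunction of $\Delta^{\sigma}$ to a nonzero eigenvalue $\lambda^{\sigma}$. Then for all $x\in V$ and all $\varepsilon>0$, \[ |\nabla^{\sigma}f|^{2}(x)\leq\left(\left((2+\varepsilon)^{2}-\frac{4}{N}\right)\frac{\lambda^{\sigma}}{\varepsilon}-\left(\frac{4}{\varepsilon}+2\right)K\right)\cdot \max_{z\in V}f^{2}(z), \] with the convention $\frac1N=0$ if $N=\infty$.
   Context: $G=(V,E)$ is a finite simple connected graph with degrees $d_x$; $\sigma:E\to\{\pm1\}$, $\sigma_{xy}=\sigma(\{x,y\})$. Signed Laplacian $\Delta^{\sigma}f(x)=\frac{1}{d_x}\sum_{y\sim x}(\sigma_{xy}f(y)-f(x))$; $\Delta$ is the case $\sigma\equiv+1$. Eigenfunction to $\lambda^\sigma$: nonzero $f$ with $-\Delta^\sigma f=\lambda^\sigma f$. $\Gamma^{\sigma}(f,g)=\frac12\{\Delta(fg)-g\Delta^{\sigma}f-f\Delta^{\sigma}g\}$, $\Gamma_2^{\sigma}(f,g)=\frac12\{\Delta\Gamma^{\sigma}(f,g)-\Gamma^{\sigma}(g,\Delta^{\sigma}f)-\Gamma^{\sigma}(f,\Delta^{\sigma}g)\}$; $|\nabla^{\sigma}f|^2(x)=\frac{1}{d_x}\sum_{y\sim x}(\sigma_{xy}f(y)-f(x))^2$. $CD^{\sigma}(K,N)$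 means $\Gamma_2^{\sigma}(f,f)(x)\ge\frac1N(\Delta^\sigma f)^2(x)+K\Gamma^\sigma(f,f)(x)$ for all $f$ and all $x\in V$. *)

theory Defs
  imports "HOL-Analysis.Analysis" "HOL-Library.Extended_Real"
begin

definition simple_graph :: "'a set \<Rightarrow> ('a \<Rightarrow> 'a \<Rightarrow> bool) \<Rightarrow> bool" where
  "simple_graph V E \<longleftrightarrow> finite V \<and> V \<noteq> {} \<and>
     (\<forall>x y. E x y \<longrightarrow> x \<in> V \<and> y \<in> V) \<and>
     (\<forall>x y. E x y \<longrightarrow> E y x) \<and> (\<forall>x. \<not> E x x)"

definition graph_connected :: "'a set \<Rightarrow> ('a \<Rightarrow> 'a \<Rightarrow> bool) \<Rightarrow> bool" where
  "graph_connected V E \<longleftrightarrow> (\<forall>x\<in>V. \<forall>y\<in>V. E\<^sup>*\<^sup>* x y)"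

definition signature :: "('a \<Rightarrow> 'a \<Rightarrow> bool) \<Rightarrow> ('a \<Rightarrow> 'a \<Rightarrow> real) \<Rightarrow> bool" where
  "signature E \<sigma> \<longleftrightarrow> (\<forall>x y. E x y \<longrightarrow> \<sigma> x y = \<sigma> y x \<and> (\<sigma> x y = 1 \<or> \<sigma> x y = -1))"

definition nbrs :: "'a set \<Rightarrow> ('a \<Rightarrow> 'a \<Rightarrow> bool) \<Rightarrow> 'a \<Rightarrow> 'a set" where
  "nbrs V E x = {y\<in>V. E x y}"

definition deg :: "'a set \<Rightarrow> ('a \<Rightarrow> 'a \<Rightarrow> bool) \<Rightarrow> 'a \<Rightarrow> real" where
  "deg V E x = real (card (nbrs V E x))"

definition slap :: "'a set \<Rightarrow> ('a \<Rightarrow> 'a \<Rightarrow> bool) \<Rightarrow> ('a \<Rightarrow> 'a \<Rightarrow> real) \<Rightarrow> ('a \<Rightarrow> real) \<Rightarrow> 'a \<Rightarrow> real" where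
  "slap V E \<sigma> f x = (1 / deg V E x) * (\<Sum>y\<in>nbrs V E x. \<sigma> x y * f y - f x)"

definition lap :: "'a set \<Rightarrow> ('a \<Rightarrow> 'a \<Rightarrow> bool) \<Rightarrow> ('a \<Rightarrow> real) \<Rightarrow> 'a \<Rightarrow> real" where
  "lap V E f x = slap V E (\<lambda>_ _. 1) f x"

definition sGamma :: "'a set \<Rightarrow> ('a \<Rightarrow> 'a \<Rightarrow> bool) \<Rightarrow> ('a \<Rightarrow> 'a \<Rightarrow> real) \<Rightarrow> ('a \<Rightarrow> real) \<Rightarrow> ('a \<Rightarrow> real) \<Rightarrow> 'a \<Rightarrow> real" where
  "sGamma V E \<sigma> f g x = (1/2) * (lap V E (\<lambda>z. f z * g z) x - g x * slap V E \<sigma> f x - f x * slap V E \<sigma> g x)"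

definition sGamma2 :: "'a set \<Rightarrow> ('a \<Rightarrow> 'a \<Rightarrow> bool) \<Rightarrow> ('a \<Rightarrow> 'a \<Rightarrow> real) \<Rightarrow> ('a \<Rightarrow> real) \<Rightarrow> ('a \<Rightarrow> real) \<Rightarrow> 'a \<Rightarrow> real" where
  "sGamma2 V E \<sigma> f g x = (1/2) * (lap V E (sGamma V E \<sigma> f g) x
      - sGamma V E \<sigma> g (slap V E \<sigma> f) x - sGamma V E \<sigma> f (slap V E \<sigma> g) x)"

definition sgrad_sq :: "'a set \<Rightarrow> ('a \<Rightarrow> 'a \<Rightarrow> bool) \<Rightarrow> ('a \<Rightarrow> 'a \<Rightarrow> real) \<Rightarrow> ('a \<Rightarrow> real) \<Rightarrow> 'a \<Rightarrow> real" where
  "sgrad_sq V E \<sigma> f x = (1 / deg V E x) * (\<Sum>y\<in>nbrs V E x. (\<sigma> x y * f y - f x)\<^sup>2)"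

definition invN :: "ereal \<Rightarrow> real" where
  "invN N = (if N = \<infinity> then 0 else 1 / real_of_ereal N)"

definition CD_sig :: "'a set \<Rightarrow> ('a \<Rightarrow> 'a \<Rightarrow> bool) \<Rightarrow> ('a \<Rightarrow> 'a \<Rightarrow> real) \<Rightarrow> real \<Rightarrow> ereal \<Rightarrow> bool" where
  "CD_sig V E \<sigma> K N \<longleftrightarrow> (\<forall>f. \<forall>x\<in>V.
     sGamma2 V E \<sigma> f f x \<ge> invN N * (slap V E \<sigma> f x)\<^sup>2 + K * sGamma V E \<sigma> f f x)"

definition s_eigenfun :: "'a set \<Rightarrow> ('a \<Rightarrow> 'a \<Rightarrow> bool) \<Rightarrow> ('a \<Rightarrow> 'a \<Rightarrow> real) \<Rightarrow> ('a \<Rightarrow> real) \<Rightarrow> real \<Rightarrow> bool" where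
  "s_eigenfun V E \<sigma> f lam \<longleftrightarrow> (\<exists>x\<in>V. f x \<noteq> 0) \<and> (\<forall>x\<in>V. - slap V E \<sigma> f x = lam * f x)"

end

(* Write Gamma = Gamma^sigma(f,f) = |grad^sigma f|^2/2.  For an eigenfunction,
   Gamma_2^sigma(f,f) = Delta Gamma/2 + lam Gamma and (Delta^sigma f)^2 = lam^2 f^2, so CD^sigma(K,N)
   becomes the Bochner-type inequality  Delta Gamma >= 2 (lam^2 f^2/N + (K - lam) Gamma).
   Summing against the degrees, where sum_x d_x Delta g(x) = 0 and sum_x d_x Gamma(x) = lam sum_x d_x f(x)^2,
   gives lam > 0 and lam >= lam/N + K.  At a maximum point x0 of H = Gamma + c f^2 with
   c = lam - K + delta we have Delta H(x0) <= 0, and as Delta(f^2) = 2 Gamma - 2 lam f^2 the Bochner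
   inequality yields delta Gamma(x0) <= lam (c - lam/N) f(x0)^2.  Hence |grad^sigma f|^2 = 2 Gamma <= 2 H
   <= 2 H(x0) is bounded by a multiple of max f^2; delta = eps lam/2 gives the stated constant. *)

theory Submission
  imports Defs
begin

lemma deg_mult_slap: "deg V E x * slap V E \<sigma> g x = (\<Sum>y\<in>nbrs V E x. \<sigma> x y * g y - g x)"
proof (cases "deg V E x = 0")
  case True
  then have "nbrs V E x = {} \<or> infinite (nbrs V E x)" by (auto simp: deg_def)
  with True show ?thesis by auto
qed (simp add: slap_def)

lemma slap_cmult: "slap V E \<sigma> (\<lambda>z. a * g z) x = a * slap V E \<sigma> g x"
  by (simp add: slap_def sum_distrib_left algebra_simps)

lemma slap_add: "slap V E \<sigma> (\<lambda>z. g z + h z) x = slap V E \<sigma> g x + slap V E \<sigma> h x"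
proof -
  have "(\<Sum>y\<in>nbrs V E x. \<sigma> x y * (g y + h y) - (g x + h x)) =
      (\<Sum>y\<in>nbrs V E x. \<sigma> x y * g y - g x) + (\<Sum>y\<in>nbrs V E x. \<sigma> x y * h y - h x)"
    by (simp add: sum.distrib[symmetric] algebra_simps)
  then show ?thesis by (simp add: slap_def distrib_left)
qed

lemma slap_cong:
  "(\<And>y. y \<in> nbrs V E x \<Longrightarrow> g y = h y) \<Longrightarrow> g x = h x \<Longrightarrow> slap V E \<sigma> g x = slap V E \<sigma> h x"
  unfolding slap_def by (auto intro!: sum.cong)

lemma sum_nbrs_swap:
  assumes "simple_graph V E"
  shows "(\<Sum>x\<in>V. \<Sum>y\<in>nbrs V E x. g x y) = (\<Sum>x\<in>V. \<Sum>y\<in>nbrs V E x. g y x)"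
proof -
  have "finite V" and "\<And>x y. E x y = E y x" using assms by (auto simp: simple_graph_def)
  then show ?thesis unfolding nbrs_def by (subst sum.swap_restrict) auto
qed

lemma sum_deg_lap_eq_0:
  assumes "simple_graph V E"
  shows "(\<Sum>x\<in>V. deg V E x * lap V E g x) = 0"
proof -
  have "(\<Sum>x\<in>V. deg V E x * lap V E g x) = (\<Sum>x\<in>V. \<Sum>y\<in>nbrs V E x. g y - g x)"
    unfolding lap_def deg_mult_slap by simp
  also have "\<dots> = 0"
    using sum_nbrs_swap[OF assms, of "\<lambda>x y. g y"] by (simp add: sum_subtractf)
  finally show ?thesis .
qed

lemma lap_mult_self: "lap V E (\<lambda>z. g z * g z) x = 2 * sGamma V E \<sigma> g g x + 2 * g x * slap V E \<sigma> g x"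
  by (simp add: sGamma_def algebra_simps)

lemma sum_deg_sGamma_self:
  assumes "simple_graph V E"
  shows "(\<Sum>x\<in>V. deg V E x * sGamma V E \<sigma> f f x) = - (\<Sum>x\<in>V. deg V E x * f x * slap V E \<sigma> f x)"
proof -
  have "(\<Sum>x\<in>V. deg V E x * lap V E (\<lambda>z. f z * f z) x) =
      2 * (\<Sum>x\<in>V. deg V E x * sGamma V E \<sigma> f f x) + 2 * (\<Sum>x\<in>V. deg V E x * f x * slap V E \<sigma> f x)"
    by (simp add: lap_mult_self[where \<sigma> = \<sigma>] sum.distrib sum_distrib_left algebra_simps)
  with sum_deg_lap_eq_0[OF assms] show ?thesis by simp
qed

lemma sGamma_self:
  assumes "signature E \<sigma>"
  shows "sGamma V E \<sigma> f f x = sgrad_sq V E \<sigma> f x / 2"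
proof -
  have "(\<sigma> x y * f y - f x)\<^sup>2 = (f y * f y - f x * f x) - 2 * f x * (\<sigma> x y * f y - f x)"
    if "y \<in> nbrs V E x" for y
  proof -
    from that assms have "\<sigma> x y = 1 \<or> \<sigma> x y = -1" by (auto simp: nbrs_def signature_def)
    then show ?thesis by (auto simp: power2_eq_square algebra_simps)
  qed
  then have "(\<Sum>y\<in>nbrs V E x. (\<sigma> x y * f y - f x)\<^sup>2) =
      (\<Sum>y\<in>nbrs V E x. (f y * f y - f x * f x) - 2 * f x * (\<sigma> x y * f y - f x))"
    by (rule sum.cong[OF refl])
  also have "\<dots> = (\<Sum>y\<in>nbrs V E x. f y * f y - f x * f x)
      - 2 * f x * (\<Sum>y\<in>nbrs V E x. \<sigma> x y * f y - f x)"
    by (simp only: sum_subtractf[of "\<lambda>y. f y * f y - f x * f x"] sum_distrib_left[of "2 * f x"])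
  finally have "(\<Sum>y\<in>nbrs V E x. (\<sigma> x y * f y - f x)\<^sup>2) = \<dots>" .
  then show ?thesis
    unfolding sGamma_def sgrad_sq_def lap_def slap_def by (simp add: right_diff_distrib)
qed

lemma sgrad_sq_nonneg: "0 \<le> sgrad_sq V E \<sigma> f x"
  by (simp add: sgrad_sq_def deg_def sum_nonneg)

lemma sGamma_cmult_right: "sGamma V E \<sigma> f (\<lambda>z. a * g z) x = a * sGamma V E \<sigma> f g x"
proof -
  have "(\<lambda>z. f z * (a * g z)) = (\<lambda>z. a * (f z * g z))" by (auto simp: algebra_simps)
  then show ?thesis by (simp add: sGamma_def lap_def slap_cmult algebra_simps)
qed

lemma sGamma_cong_right:
  assumes "x \<in> V" and "\<And>z. z \<in> V \<Longrightarrow> g z = h z"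
  shows "sGamma V E \<sigma> f g x = sGamma V E \<sigma> f h x"
proof -
  have "lap V E (\<lambda>z. f z * g z) x = lap V E (\<lambda>z. f z * h z) x"
    unfolding lap_def by (rule slap_cong) (use assms in \<open>auto simp: nbrs_def\<close>)
  moreover have "slap V E \<sigma> g x = slap V E \<sigma> h x"
    by (rule slap_cong) (use assms in \<open>auto simp: nbrs_def\<close>)
  ultimately show ?thesis using assms by (simp add: sGamma_def)
qed

lemma lap_nonpos_at_max:
  assumes "\<And>z. z \<in> V \<Longrightarrow> h z \<le> h x"
  shows "lap V E h x \<le> 0"
proof -
  have "(\<Sum>y\<in>nbrs V E x. h y - h x) \<le> 0"
    by (rule sum_nonpos) (use assms in \<open>auto simp: nbrs_def\<close>)
  then show ?thesis by (simp add: lap_def slap_def divide_nonpos_nonneg deg_def)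
qed

lemma invN_nonneg: "N > 0 \<Longrightarrow> invN N \<ge> 0"
  by (cases N) (auto simp: invN_def)

lemma s_eigenfun_slap:
  assumes "s_eigenfun V E \<sigma> f lam" and "x \<in> V"
  shows "slap V E \<sigma> f x = - lam * f x"
  using assms unfolding s_eigenfun_def by (metis add.inverse_inverse mult_minus_left)

lemma s_eigenfun_sGamma2:
  assumes "s_eigenfun V E \<sigma> f lam" and "x \<in> V"
  shows "sGamma2 V E \<sigma> f f x = lap V E (sGamma V E \<sigma> f f) x / 2 + lam * sGamma V E \<sigma> f f x"
proof -
  have "sGamma V E \<sigma> f (slap V E \<sigma> f) x = sGamma V E \<sigma> f (\<lambda>z. - lam * f z) x"
    by (rule sGamma_cong_right) (use assms s_eigenfun_slap in auto)
  also have "\<dots> = - lam * sGamma V E \<sigma> f f x"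
    by (rule sGamma_cmult_right)
  finally show ?thesis by (simp add: sGamma2_def)
qed

lemma CD_sig_s_eigenfun_lap_sGamma:
  assumes "CD_sig V E \<sigma> K N" and "s_eigenfun V E \<sigma> f lam" and "x \<in> V"
  shows "2 * (invN N * lam\<^sup>2 * (f x)\<^sup>2 + (K - lam) * sGamma V E \<sigma> f f x)
    \<le> lap V E (sGamma V E \<sigma> f f) x"
proof -
  have "invN N * (slap V E \<sigma> f x)\<^sup>2 + K * sGamma V E \<sigma> f f x \<le> sGamma2 V E \<sigma> f f x"
    using assms(1,3) by (simp add: CD_sig_def)
  moreover have "(slap V E \<sigma> f x)\<^sup>2 = lam\<^sup>2 * (f x)\<^sup>2"
    using s_eigenfun_slap[OF assms(2,3)] by (simp add: power_mult_distrib)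
  ultimately show ?thesis
    using s_eigenfun_sGamma2[OF assms(2,3)] by (simp add: algebra_simps)
qed

lemma s_eigenfun_sum_deg_sGamma:
  assumes "simple_graph V E" and "s_eigenfun V E \<sigma> f lam"
  shows "(\<Sum>x\<in>V. deg V E x * sGamma V E \<sigma> f f x) = lam * (\<Sum>x\<in>V. deg V E x * (f x)\<^sup>2)"
proof -
  have "(\<Sum>x\<in>V. deg V E x * f x * slap V E \<sigma> f x) = (\<Sum>x\<in>V. - lam * (deg V E x * (f x)\<^sup>2))"
    using s_eigenfun_slap[OF assms(2)] by (intro sum.cong) (auto simp: power2_eq_square)
  then show ?thesis
    by (simp add: sum_deg_sGamma_self[OF assms(1)] sum_negf sum_distrib_left)
qed

lemma s_eigenfun_sum_deg_sq_pos:
  assumes "simple_graph V E" and "s_eigenfun V E \<sigma> f lam" and "lam \<noteq> 0"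
  shows "0 < (\<Sum>x\<in>V. deg V E x * (f x)\<^sup>2)"
proof -
  obtain w where "w \<in> V" and "f w \<noteq> 0" and "- slap V E \<sigma> f w = lam * f w"
    using assms(2) by (auto simp: s_eigenfun_def)
  \<comment> \<open>at an isolated vertex the Laplacian vanishes, which rules out lam f w \<noteq> 0\<close>
  with assms(3) have "deg V E w \<noteq> 0" by (auto simp: slap_def)
  with \<open>f w \<noteq> 0\<close> have "0 < deg V E w * (f w)\<^sup>2" by (simp add: deg_def)
  also have "\<dots> \<le> (\<Sum>x\<in>V. deg V E x * (f x)\<^sup>2)"
    using assms(1) \<open>w \<in> V\<close> by (intro member_le_sum) (auto simp: simple_graph_def deg_def)
  finally show ?thesis .
qed

lemma s_eigenvalue_nonneg:
  assumes "simple_graph V E" and "signature E \<sigma>" and "s_eigenfun V E \<sigma> f lam"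
  shows "0 \<le> lam"
proof (cases "lam = 0")
  case False
  have "0 \<le> (\<Sum>x\<in>V. deg V E x * sGamma V E \<sigma> f f x)"
    by (intro sum_nonneg mult_nonneg_nonneg) (simp_all add: sGamma_self[OF assms(2)] deg_def sgrad_sq_nonneg)
  then show ?thesis
    using s_eigenfun_sum_deg_sGamma[OF assms(1,3)] s_eigenfun_sum_deg_sq_pos[OF assms(1,3) False]
    by (simp add: zero_le_mult_iff)
qed simp

lemma CD_sig_s_eigenvalue_ge:
  assumes "simple_graph V E" and "signature E \<sigma>" and "CD_sig V E \<sigma> K N"
    and "s_eigenfun V E \<sigma> f lam" and "lam \<noteq> 0"
  shows "invN N * lam + K \<le> lam"
proof -
  define S where "S = (\<Sum>x\<in>V. deg V E x * (f x)\<^sup>2)"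
  have "0 < lam * S"
    using s_eigenvalue_nonneg[OF assms(1,2,4)] s_eigenfun_sum_deg_sq_pos[OF assms(1,4,5)] assms(5)
    by (simp add: S_def)
  have "2 * (lam * S) * (invN N * lam + K - lam)
      = 2 * invN N * lam\<^sup>2 * S + 2 * (K - lam) * (\<Sum>x\<in>V. deg V E x * sGamma V E \<sigma> f f x)"
    using s_eigenfun_sum_deg_sGamma[OF assms(1,4)] by (simp add: S_def power2_eq_square algebra_simps)
  also have "\<dots> = (\<Sum>x\<in>V. 2 * invN N * lam\<^sup>2 * (deg V E x * (f x)\<^sup>2)
      + 2 * (K - lam) * (deg V E x * sGamma V E \<sigma> f f x))"
    by (simp add: S_def sum.distrib sum_distrib_left)
  also have "\<dots> = (\<Sum>x\<in>V. deg V E x * (2 * (invN N * lam\<^sup>2 * (f x)\<^sup>2 + (K - lam) * sGamma V E \<sigma> f f x)))"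
    by (simp add: algebra_simps)
  also have "\<dots> \<le> (\<Sum>x\<in>V. deg V E x * lap V E (sGamma V E \<sigma> f f) x)"
    using CD_sig_s_eigenfun_lap_sGamma[OF assms(3,4)]
    by (intro sum_mono mult_left_mono) (auto simp: deg_def)
  also have "\<dots> = 0"
    by (rule sum_deg_lap_eq_0[OF assms(1)])
  finally show ?thesis
    using \<open>0 < lam * S\<close> by (auto simp: mult_le_0_iff zero_less_mult_iff)
qed

lemma CD_sig_s_eigenfun_at_max:
  assumes "CD_sig V E \<sigma> K N" and "s_eigenfun V E \<sigma> f lam" and "x \<in> V"
    and "\<And>z. z \<in> V \<Longrightarrow> sGamma V E \<sigma> f f z + c * (f z)\<^sup>2 \<le> sGamma V E \<sigma> f f x + c * (f x)\<^sup>2"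
  shows "(c - lam + K) * sGamma V E \<sigma> f f x \<le> lam * (c - invN N * lam) * (f x)\<^sup>2"
proof -
  let ?\<Gamma> = "sGamma V E \<sigma> f f"
  have "lap V E (\<lambda>z. ?\<Gamma> z + c * (f z * f z)) x \<le> 0"
    by (rule lap_nonpos_at_max) (use assms(4) in \<open>simp add: power2_eq_square\<close>)
  moreover have "lap V E (\<lambda>z. ?\<Gamma> z + c * (f z * f z)) x = lap V E ?\<Gamma> x + c * lap V E (\<lambda>z. f z * f z) x"
    by (simp add: lap_def slap_add slap_cmult)
  moreover have "lap V E (\<lambda>z. f z * f z) x = 2 * ?\<Gamma> x - 2 * lam * (f x)\<^sup>2"
    using s_eigenfun_slap[OF assms(2,3)] by (simp add: lap_mult_self[where \<sigma> = \<sigma>] power2_eq_square)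
  ultimately show ?thesis
    using CD_sig_s_eigenfun_lap_sGamma[OF assms(1-3)] by (simp add: algebra_simps power2_eq_square)
qed

lemma CD_sig_s_eigenfun_sgrad_sq_le:
  assumes "simple_graph V E" and "signature E \<sigma>" and "N > 0" and "CD_sig V E \<sigma> K N"
    and "s_eigenfun V E \<sigma> f lam" and "lam \<noteq> 0" and "\<delta> > 0" and "x \<in> V"
  shows "sgrad_sq V E \<sigma> f x
    \<le> 2 * (lam * (lam - K + \<delta> - invN N * lam) / \<delta> + (lam - K + \<delta>)) * (MAX z\<in>V. (f z)\<^sup>2)"
proof -
  define c where "c = lam - K + \<delta>"
  define H where "H z = sGamma V E \<sigma> f f z + c * (f z)\<^sup>2" for z
  have "0 < lam"
    using s_eigenvalue_nonneg[OF assms(1,2,5)] assms(6) by simp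
  then have "0 \<le> invN N * lam"
    using invN_nonneg[OF assms(3)] by simp
  then have "\<delta> \<le> c - invN N * lam" and "0 \<le> c"
    using CD_sig_s_eigenvalue_ge[OF assms(1,2,4,5,6)] assms(7) by (simp_all add: c_def)
  have "finite V" and "V \<noteq> {}"
    using assms(1) by (auto simp: simple_graph_def)
  then have "Max (H ` V) \<in> H ` V" and "\<And>z. z \<in> V \<Longrightarrow> H z \<le> Max (H ` V)"
    by simp_all
  then obtain x0 where "x0 \<in> V" and x0_max: "\<And>z. z \<in> V \<Longrightarrow> H z \<le> H x0"
    by (metis imageE)
  have at_max: "\<delta> * sGamma V E \<sigma> f f x0 \<le> lam * (c - invN N * lam) * (f x0)\<^sup>2"
    using CD_sig_s_eigenfun_at_max[OF assms(4,5) \<open>x0 \<in> V\<close>, of c] x0_max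
    by (simp add: H_def c_def)
  define q where "q = lam * (c - invN N * lam) / \<delta>"
  have \<Gamma>_x0: "sGamma V E \<sigma> f f x0 \<le> q * (f x0)\<^sup>2"
    using at_max assms(7) by (simp add: q_def field_simps)
  have coeff_nonneg: "0 \<le> q + c"
    using \<open>0 < lam\<close> \<open>\<delta> \<le> c - invN N * lam\<close> \<open>0 \<le> c\<close> assms(7) by (simp add: q_def)
  have max_ge: "(f x0)\<^sup>2 \<le> (MAX z\<in>V. (f z)\<^sup>2)"
    using \<open>finite V\<close> \<open>x0 \<in> V\<close> by simp
  have "sgrad_sq V E \<sigma> f x = 2 * sGamma V E \<sigma> f f x"
    by (simp add: sGamma_self[OF assms(2)])
  also have "\<dots> \<le> 2 * H x"
    using \<open>0 \<le> c\<close> by (simp add: H_def)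
  also have "\<dots> \<le> 2 * H x0"
    using x0_max assms(8) by simp
  also have "\<dots> \<le> 2 * (q + c) * (f x0)\<^sup>2"
    using \<Gamma>_x0 by (simp add: H_def algebra_simps)
  also have "\<dots> \<le> 2 * (q + c) * (MAX z\<in>V. (f z)\<^sup>2)"
    using coeff_nonneg max_ge by (intro mult_left_mono) simp_all
  finally show ?thesis
    by (simp add: q_def c_def)
qed

theorem corollary3p2:
  fixes V :: "'a set" and E :: "'a \<Rightarrow> 'a \<Rightarrow> bool" and \<sigma> :: "'a \<Rightarrow> 'a \<Rightarrow> real"
    and K :: real and N :: ereal and f :: "'a \<Rightarrow> real" and lam :: real
  assumes "simple_graph V E" and "graph_connected V E" and "signature E \<sigma>"
    and "N > 0" and "CD_sig V E \<sigma> K N"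
    and "s_eigenfun V E \<sigma> f lam" and "lam \<noteq> 0"
  shows "\<forall>x\<in>V. \<forall>\<epsilon>>0. sgrad_sq V E \<sigma> f x \<le>
     (((2 + \<epsilon>)\<^sup>2 - 4 * invN N) * lam / \<epsilon> - (4 / \<epsilon> + 2) * K) * (MAX z\<in>V. (f z)\<^sup>2)"
proof (intro ballI allI impI)
  fix x and \<epsilon> :: real
  assume "x \<in> V" and "\<epsilon> > 0"
  have "0 < lam"
    using s_eigenvalue_nonneg[OF assms(1,3,6)] assms(7) by simp
  define \<delta> where "\<delta> = \<epsilon> * lam / 2"
  have "\<delta> > 0"
    using \<open>0 < lam\<close> \<open>\<epsilon> > 0\<close> by (simp add: \<delta>_def)
  have "2 * (lam * (lam - K + \<delta> - invN N * lam) / \<delta> + (lam - K + \<delta>))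
      = ((2 + \<epsilon>)\<^sup>2 - 4 * invN N) * lam / \<epsilon> - (4 / \<epsilon> + 2) * K"
    using \<open>0 < lam\<close> \<open>\<epsilon> > 0\<close> by (simp add: \<delta>_def field_simps power2_eq_square)
  then show "sgrad_sq V E \<sigma> f x \<le>
     (((2 + \<epsilon>)\<^sup>2 - 4 * invN N) * lam / \<epsilon> - (4 / \<epsilon> + 2) * K) * (MAX z\<in>V. (f z)\<^sup>2)"
    using CD_sig_s_eigenfun_sgrad_sq_le[OF assms(1,3,4,5,6,7) \<open>\<delta> > 0\<close> \<open>x \<in> V\<close>] by simp
qed

end
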